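(* Let $n_0,n_1$ be positive integers and let $(\eta,\omega)=((\eta_\ell)_{\ell\ge1},(\omega_\ell)_{\ell\ge1})$ be a pair of nonnegative integer sequences with finite support. The pair of conditions [(a) $\mathsf{K}^+=0$, and (b) $\mathsf{K}^+_\ell\ge|\mathsf{K}^-_\ell|$ for every $\ell\ge1$] is equivalent to the following conditions: (i) $\sum_{\ell\ge1}\frac{\eta_\ell+\omega_\ell}{(n_0+n_1)^\ell}=1$; (ii) $\sum_{\ell\ge1}\frac{\eta_\ell-\omega_\ell}{(n_0-n_1)^\ell}=1$ whenever $n_0\ne n_1$; (iii) for every $\ell\ge1$, $\sum_{i\ge1}\frac{\eta_{\ell+i}+\omega_{\ell+i}}{(n_0+n_1)^i}\ge|\eta_\ell-\omega_\ell|$ if $n_0=n_1$, and $\sum_{i\ge1}\frac{\eta_{\ell+i}+\omega_{\ell+i}}{(n_0+n_1)^i}\ge\Bigl|\sum_{i\ge1}\frac{\eta_{\ell+i}-\omega_{\ell+i}}{(n_0-n_1)^i}\Bigr|$ if $n_0\ne n_1$.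
   Context: For integers $n,\ell>0$ and a finite-support integer sequence $\mu=(\mu_i)_{i\ge1}$, $\mathsf{K}_\ell(\mu,n)=n^\ell-\sum_{i=1}^{\ell}\mu_i n^{\ell-i}$ (with $0^0=1$). Define $\mathsf{K}^+_\ell=\mathsf{K}_\ell(\eta+\omega,n_0+n_1)$, $\mathsf{K}^-_\ell=\mathsf{K}_\ell(\eta-\omega,n_0-n_1)$, let $\mathsf{r}$ be the largest index in the union of the supports of $\eta$ and $\omega$, and $\mathsf{K}^\pm=\mathsf{K}^\pm_{\mathsf{r}}$. *)

theory Defs
  imports Complex_Main
begin

text \<open>K_l(mu, n) = n^l - sum_{i=1}^{l} mu_i n^(l-i), with 0^0 = 1 (Isabelle convention).\<close>
definition Kfun :: "nat \<Rightarrow> (nat \<Rightarrow> int) \<Rightarrow> int \<Rightarrow> int" where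
  "Kfun l \<mu> n = n ^ l - (\<Sum>i=1..l. \<mu> i * n ^ (l - i))"

definition Kplus :: "(nat \<Rightarrow> nat) \<Rightarrow> (nat \<Rightarrow> nat) \<Rightarrow> nat \<Rightarrow> nat \<Rightarrow> nat \<Rightarrow> int" where
  "Kplus \<eta> \<omega> n0 n1 l = Kfun l (\<lambda>i. int (\<eta> i) + int (\<omega> i)) (int n0 + int n1)"

definition Kminus :: "(nat \<Rightarrow> nat) \<Rightarrow> (nat \<Rightarrow> nat) \<Rightarrow> nat \<Rightarrow> nat \<Rightarrow> nat \<Rightarrow> int" where
  "Kminus \<eta> \<omega> n0 n1 l = Kfun l (\<lambda>i. int (\<eta> i) - int (\<omega> i)) (int n0 - int n1)"

definition rmax :: "(nat \<Rightarrow> nat) \<Rightarrow> (nat \<Rightarrow> nat) \<Rightarrow> nat" where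
  "rmax \<eta> \<omega> = Max (insert 0 {i. 1 \<le> i \<and> (\<eta> i \<noteq> 0 \<or> \<omega> i \<noteq> 0)})"

end

theory Submission
  imports Defs
begin

text \<open>For a sequence \<open>\<mu>\<close> vanishing beyond \<open>r\<close> and \<open>x \<noteq> 0\<close> let
  \<open>T l = \<Sum>i\<ge>1. \<mu> (l + i) / x ^ i\<close>. Then \<open>x * T l = \<mu> (l + 1) + T (l + 1)\<close>, and unrolling
  this recursion gives \<open>K_l(\<mu>, x) = x ^ l * (1 - T 0) + T l\<close>. As \<open>T r = 0\<close>, the equation
  \<open>K_r = 0\<close> says exactly \<open>T 0 = 1\<close>, and then \<open>K_l = T l\<close> for every \<open>l\<close>. For \<open>K\<^sup>+\<close> this
  yields (i) and turns (b) into (iii). If \<open>n0 \<noteq> n1\<close>, condition (b) at \<open>l = r\<close> forces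
  \<open>K\<^sup>-_r = 0\<close>, which is (ii), and again \<open>K\<^sup>-_l = T\<^sup>- l\<close>; if \<open>n0 = n1\<close>, then simply
  \<open>K\<^sup>-_l = \<omega> l - \<eta> l\<close>.\<close>

definition tail :: "(nat \<Rightarrow> 'a::real_normed_field) \<Rightarrow> 'a \<Rightarrow> nat \<Rightarrow> 'a" where
  "tail \<mu> x l = (\<Sum>i. \<mu> (l + Suc i) / x ^ Suc i)"

lemma tail_eq_sum:
  assumes "\<forall>j>r. \<mu> j = 0"
  shows "tail \<mu> x l = (\<Sum>i<r. \<mu> (l + Suc i) / x ^ Suc i)"
  unfolding tail_def by (rule suminf_finite) (use assms in auto)

lemma tail_eq_0:
  assumes "\<forall>j>r. \<mu> j = 0" and "r \<le> l"
  shows "tail \<mu> x l = 0"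
  using assms by (simp add: tail_eq_sum[OF assms(1)])

lemma tail_Suc:
  assumes "x \<noteq> 0" and vanish: "\<forall>j>r. \<mu> j = 0"
  shows "x * tail \<mu> x l = \<mu> (Suc l) + tail \<mu> x (Suc l)"
proof -
  have "x * tail \<mu> x l = (\<Sum>i<r. \<mu> (l + Suc i) / x ^ i)"
    by (simp add: tail_eq_sum[OF vanish] sum_distrib_left assms(1))
  also have "\<dots> = (\<Sum>i<Suc r. \<mu> (l + Suc i) / x ^ i)"
    using vanish by simp
  also have "\<dots> = \<mu> (Suc l) + tail \<mu> x (Suc l)"
    by (subst sum.lessThan_Suc_shift) (simp add: tail_eq_sum[OF vanish])
  finally show ?thesis .
qed

lemma power_mult_tail:
  assumes "x \<noteq> 0" and "\<forall>j>r. \<mu> j = 0"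
  shows "x ^ l * tail \<mu> x 0 = (\<Sum>i=1..l. \<mu> i * x ^ (l - i)) + tail \<mu> x l"
proof (induction l)
  case 0
  show ?case by simp
next
  case (Suc l)
  have "(\<Sum>i=1..l. \<mu> i * x ^ (Suc l - i)) = x * (\<Sum>i=1..l. \<mu> i * x ^ (l - i))"
    unfolding sum_distrib_left by (rule sum.cong) (auto simp: Suc_diff_le)
  then have "(\<Sum>i=1..Suc l. \<mu> i * x ^ (Suc l - i)) = x * (\<Sum>i=1..l. \<mu> i * x ^ (l - i)) + \<mu> (Suc l)"
    by (simp add: sum.cl_ivl_Suc)
  then show ?case
    using Suc.IH tail_Suc[OF assms, of l] by (simp add: algebra_simps)
qed

lemma of_int_Kfun_eq_tail:
  assumes "n \<noteq> 0" and "\<forall>j>r. \<mu> j = 0"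
  shows "(of_int (Kfun l \<mu> n) :: 'a::real_normed_field) =
    of_int n ^ l * (1 - tail (\<lambda>i. of_int (\<mu> i)) (of_int n) 0) + tail (\<lambda>i. of_int (\<mu> i)) (of_int n) l"
  using power_mult_tail[of "of_int n :: 'a" r "\<lambda>i. of_int (\<mu> i)" l] assms
  by (simp add: Kfun_def right_diff_distrib)

lemma Kfun_eq_0_iff_tail:
  assumes "n \<noteq> 0" and "\<forall>j>r. \<mu> j = 0"
  shows "Kfun r \<mu> n = 0 \<longleftrightarrow> tail (\<lambda>i. real_of_int (\<mu> i)) (of_int n) 0 = 1"
proof -
  have "real_of_int (Kfun r \<mu> n) = of_int n ^ r * (1 - tail (\<lambda>i. real_of_int (\<mu> i)) (of_int n) 0)"
    using of_int_Kfun_eq_tail[where 'a=real, OF assms, of r] tail_eq_0[of r "\<lambda>i. real_of_int (\<mu> i)" r] assms(2)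
    by simp
  then show ?thesis
    using assms(1) by (metis eq_iff_diff_eq_0 mult_eq_0_iff of_int_eq_0_iff power_eq_0_iff)
qed

lemma of_int_Kfun_eq_tail_if_normalized:
  assumes "n \<noteq> 0" and "\<forall>j>r. \<mu> j = 0" and "tail (\<lambda>i. real_of_int (\<mu> i)) (of_int n) 0 = 1"
  shows "real_of_int (Kfun l \<mu> n) = tail (\<lambda>i. real_of_int (\<mu> i)) (of_int n) l"
  using of_int_Kfun_eq_tail[where 'a=real, OF assms(1,2), of l] assms(3) by simp

lemma Kfun_at_0:
  assumes "l \<ge> 1"
  shows "Kfun l \<mu> 0 = - \<mu> l"
proof -
  have "(\<Sum>i=1..l. \<mu> i * 0 ^ (l - i)) = (\<Sum>i=1..l. if i = l then \<mu> l else 0)"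
    by (rule sum.cong) auto
  then show ?thesis
    using assms by (simp add: Kfun_def)
qed

lemma abs_le_iff_of_int: "\<bar>b\<bar> \<le> a \<longleftrightarrow> \<bar>real_of_int b\<bar> \<le> real_of_int a"
  by (metis of_int_abs of_int_le_iff)

lemma Kfun_dominance_iff_tails:
  fixes p q :: "nat \<Rightarrow> int" and a b :: int
  assumes "a \<noteq> 0" "b \<noteq> 0" and "\<forall>j>r. p j = 0" "\<forall>j>r. q j = 0"
  defines "P \<equiv> tail (\<lambda>i. real_of_int (p i)) (of_int a)"
    and "Q \<equiv> tail (\<lambda>i. real_of_int (q i)) (of_int b)"
  shows "(Kfun r p a = 0 \<and> (\<forall>l\<ge>1. \<bar>Kfun l q b\<bar> \<le> Kfun l p a)) \<longleftrightarrow>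
    (P 0 = 1 \<and> Q 0 = 1 \<and> (\<forall>l\<ge>1. \<bar>Q l\<bar> \<le> P l))"
proof -
  have dominance_iff: "\<bar>Kfun l q b\<bar> \<le> Kfun l p a \<longleftrightarrow> \<bar>Q l\<bar> \<le> P l" if "P 0 = 1" "Q 0 = 1" for l
    using that of_int_Kfun_eq_tail_if_normalized[OF assms(1,3)] of_int_Kfun_eq_tail_if_normalized[OF assms(2,4)]
    unfolding abs_le_iff_of_int P_def Q_def by simp
  have "Q 0 = 1" if "P 0 = 1" and dom: "\<forall>l\<ge>1. \<bar>Kfun l q b\<bar> \<le> Kfun l p a" and "Kfun r p a = 0"
  proof -
    have "r \<noteq> 0"
    proof
      assume "r = 0"
      then have "P 0 = 0"
        using tail_eq_0[of r "\<lambda>i. real_of_int (p i)" 0] assms(3) by (simp add: P_def)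
      with \<open>P 0 = 1\<close> show False
        by simp
    qed
    then have "\<bar>Kfun r q b\<bar> \<le> 0"
      using dom \<open>Kfun r p a = 0\<close> by (metis less_one linorder_not_le)
    then have "Kfun r q b = 0"
      by simp
    then show ?thesis
      using Kfun_eq_0_iff_tail[OF assms(2,4)] by (simp add: Q_def)
  qed
  then show ?thesis
    using dominance_iff Kfun_eq_0_iff_tail[OF assms(1,3)] by (auto simp: P_def)
qed

lemma Kfun_dominance_at_0_iff_tail:
  fixes p q :: "nat \<Rightarrow> int" and a :: int
  assumes "a \<noteq> 0" and "\<forall>j>r. p j = 0"
  defines "P \<equiv> tail (\<lambda>i. real_of_int (p i)) (of_int a)"
  shows "(Kfun r p a = 0 \<and> (\<forall>l\<ge>1. \<bar>Kfun l q 0\<bar> \<le> Kfun l p a)) \<longleftrightarrow>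
    (P 0 = 1 \<and> (\<forall>l\<ge>1. \<bar>real_of_int (q l)\<bar> \<le> P l))"
proof -
  have "\<bar>Kfun l q 0\<bar> \<le> Kfun l p a \<longleftrightarrow> \<bar>real_of_int (q l)\<bar> \<le> P l" if "P 0 = 1" "l \<ge> 1" for l
    using that of_int_Kfun_eq_tail_if_normalized[OF assms(1,2)] Kfun_at_0[OF that(2)]
    unfolding abs_le_iff_of_int P_def by simp
  then show ?thesis
    using Kfun_eq_0_iff_tail[OF assms(1,2)] by (auto simp: P_def)
qed

lemma rmax_vanish:
  assumes "finite {i. 1 \<le> i \<and> \<eta> i \<noteq> 0}" and "finite {i. 1 \<le> i \<and> \<omega> i \<noteq> 0}"
    and "rmax \<eta> \<omega> < j"
  shows "\<eta> j = 0 \<and> \<omega> j = 0"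
proof -
  have "{i. 1 \<le> i \<and> (\<eta> i \<noteq> 0 \<or> \<omega> i \<noteq> 0)} = {i. 1 \<le> i \<and> \<eta> i \<noteq> 0} \<union> {i. 1 \<le> i \<and> \<omega> i \<noteq> 0}"
    by auto
  then have "finite {i. 1 \<le> i \<and> (\<eta> i \<noteq> 0 \<or> \<omega> i \<noteq> 0)}"
    using assms(1,2) by simp
  then show ?thesis
    using assms(3) Max_ge[of "insert 0 {i. 1 \<le> i \<and> (\<eta> i \<noteq> 0 \<or> \<omega> i \<noteq> 0)}" j]
    unfolding rmax_def by fastforce
qed

theorem lemma1:
  fixes n0 n1 :: nat and \<eta> \<omega> :: "nat \<Rightarrow> nat"
  assumes "n0 > 0" and "n1 > 0"
    and "finite {i. 1 \<le> i \<and> \<eta> i \<noteq> 0}"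
    and "finite {i. 1 \<le> i \<and> \<omega> i \<noteq> 0}"
  shows "(Kplus \<eta> \<omega> n0 n1 (rmax \<eta> \<omega>) = 0 \<and>
          (\<forall>l\<ge>1. Kplus \<eta> \<omega> n0 n1 l \<ge> \<bar>Kminus \<eta> \<omega> n0 n1 l\<bar>))
     \<longleftrightarrow>
         ((\<Sum>l. (real (\<eta> (Suc l)) + real (\<omega> (Suc l))) / real (n0 + n1) ^ Suc l) = 1 \<and>
          (n0 \<noteq> n1 \<longrightarrow>
             (\<Sum>l. (real (\<eta> (Suc l)) - real (\<omega> (Suc l))) / (real n0 - real n1) ^ Suc l) = 1) \<and>
          (\<forall>l\<ge>1.
             (n0 = n1 \<longrightarrow>
                (\<Sum>i. (real (\<eta> (l + Suc i)) + real (\<omega> (l + Suc i))) / real (n0 + n1) ^ Suc i)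
                  \<ge> \<bar>real (\<eta> l) - real (\<omega> l)\<bar>) \<and>
             (n0 \<noteq> n1 \<longrightarrow>
                (\<Sum>i. (real (\<eta> (l + Suc i)) + real (\<omega> (l + Suc i))) / real (n0 + n1) ^ Suc i)
                  \<ge> \<bar>\<Sum>i. (real (\<eta> (l + Suc i)) - real (\<omega> (l + Suc i))) / (real n0 - real n1) ^ Suc i\<bar>)))"
proof -
  have vanish: "\<forall>j>rmax \<eta> \<omega>. int (\<eta> j) + int (\<omega> j) = 0" "\<forall>j>rmax \<eta> \<omega>. int (\<eta> j) - int (\<omega> j) = 0"
  proof (safe)
    fix j
    assume "rmax \<eta> \<omega> < j"
    from rmax_vanish[OF assms(3,4) this] show "int (\<eta> j) + int (\<omega> j) = 0" "int (\<eta> j) - int (\<omega> j) = 0"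
      by simp_all
  qed
  have "int n0 + int n1 \<noteq> 0"
    using assms(1) by simp
  show ?thesis
  proof (cases "n0 = n1")
    case True
    then show ?thesis
      using Kfun_dominance_at_0_iff_tail[OF \<open>int n0 + int n1 \<noteq> 0\<close> vanish(1), of "\<lambda>i. int (\<eta> i) - int (\<omega> i)"]
      unfolding Kplus_def Kminus_def by (simp add: tail_def)
  next
    case False
    then have "int n0 - int n1 \<noteq> 0"
      by simp
    with False show ?thesis
      using Kfun_dominance_iff_tails[OF \<open>int n0 + int n1 \<noteq> 0\<close> _ vanish]
      unfolding Kplus_def Kminus_def by (simp add: tail_def)
  qed
qed

end
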